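(* Let $d\ge 3$, $m=d$, $\lambda>0$, $w_\star,v\in\mathbb{S}^{d-1}$ with $v^\top w_\star=0$, $Q=I_d+\lambda vv^\top$, $P_\perp=I_d-w_\star w_\star^\top-vv^\top$. Let $\mathcal L(W)=\mathbb{E}\big(y-\sum_{j=1}^m(w_j^\top x)^2\big)^2$ with $x\sim\mathcal N(0,Q)$, $y=(x^\top w_\star)^2+\nu$, $\nu\sim\mathcal N(0,\sigma^2)$ independent of $x$. Let $\tilde W(t)$ solve the gradient flow $\dot{\tilde W}(t)=-\nabla_W\mathcal L(\tilde W(t))$ and suppose that $\tilde M(t):=\tilde W(t)\tilde W(t)^\top=\tilde a(t)\,w_\star w_\star^\top+\tilde b(t)\,vv^\top+\tilde c(t)\,P_\perp$ for scalars $\tilde a(t),\tilde b(t),\tilde c(t)$. Then \[ \dot{\tilde a}=-2g_{w_\star}\tilde a,\qquad \dot{\tilde b}=-2g_v\tilde b,\qquad \dot{\tilde c}=-2g_\perp\tilde c, \] where $\tilde r:=\tilde a+(1+\lambda)\tilde b+(d-2)\tilde c$ and \[ g_{w_\star}=8(\tilde a-1)+4(\tilde r-1),\quad g_v=8(1+\lambda)^2\tilde b+4(1+\lambda)(\tilde r-1),\quad g_\perp=8\tilde c+4(\tilde r-1). \] *)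

theory Defs
  imports "HOL-Analysis.Analysis" "HOL-Probability.Probability"
begin

definition outer :: "real^'n \<Rightarrow> real^'n \<Rightarrow> real^'n^'n" where
  "outer u w = (\<chi> i j. u $ i * w $ j)"

definition gauss_density :: "real^'n^'n \<Rightarrow> real^'n \<Rightarrow> real" where
  "gauss_density Q x =
     exp (- (x \<bullet> (matrix_inv Q *v x)) / 2) / sqrt ((2 * pi) ^ CARD('n) * det Q)"

text \<open>Population loss L(W) = E (y - sum_j (w_j^T x)^2)^2 with x ~ N(0,Q),
  y = (x^T w_star)^2 + nu, nu ~ N(0, sigma^2) independent of x.
  The j-th neuron w_j is the row W $ j (m = d neurons).\<close>
definition pop_loss :: "real^'n^'n \<Rightarrow> real^'n \<Rightarrow> real \<Rightarrow> real^'n^'n \<Rightarrow> real" where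
  "pop_loss Q ws \<sigma> W =
     (\<integral>x. (\<integral>\<nu>. (((x \<bullet> ws)\<^sup>2 + \<nu>) - (\<Sum>j\<in>UNIV. (W $ j \<bullet> x)\<^sup>2))\<^sup>2
              \<partial>(density lborel (normal_density 0 \<sigma>)))
       \<partial>(density lborel (gauss_density Q)))"

end

theory Submission
  imports Defs
begin

text \<open>The loss depends on \<open>W\<close> only through \<open>M = W W\<^sup>T\<close>. Writing \<open>x \<sim> N(0, I + \<lambda> v v\<^sup>T)\<close>
  as \<open>z + s v\<close> with \<open>z\<close> standard Gaussian and \<open>s \<sim> N(0, \<lambda>)\<close> independent, Isserlis' formula
  for the fourth moments of \<open>z\<close> evaluates the loss on the ansatz
  \<open>M = \<alpha> w\<^sub>\<star> w\<^sub>\<star>\<^sup>T + \<beta> v v\<^sup>T + \<gamma> P\<^sub>\<bottom>\<close> as an explicit polynomial in \<open>\<alpha>, \<beta>, \<gamma>\<close>.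
  For \<open>A = k\<^sub>1 w\<^sub>\<star> w\<^sub>\<star>\<^sup>T + k\<^sub>2 v v\<^sup>T + k\<^sub>3 P\<^sub>\<bottom>\<close>, replacing every row \<open>w\<^sub>j\<close> of \<open>W\<close> by
  \<open>w\<^sub>j + s A w\<^sub>j\<close> stays in the ansatz family, with \<open>\<alpha>, \<beta>, \<gamma>\<close> multiplied by \<open>(1 + s k\<^sub>i)\<^sup>2\<close>;
  differentiating at \<open>s = 0\<close> computes \<open>\<langle>\<nabla>\<L>, W A\<rangle>\<close> from that polynomial. Along the flow,
  \<open>\<langle>W, W A\<rangle> = k\<^sub>1 a + k\<^sub>2 b + (d - 2) k\<^sub>3 c\<close> has derivative \<open>-2 \<langle>\<nabla>\<L>, W A\<rangle>\<close>, and the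
  three unit choices of \<open>k\<close> give the three equations.\<close>

section \<open>Moments of the standard Gaussian vector\<close>

definition std_gauss_density :: "'a::euclidean_space \<Rightarrow> real" where
  "std_gauss_density z = (\<Prod>b\<in>Basis. std_normal_density (z \<bullet> b))"

lemma std_gauss_density_eq:
  "std_gauss_density (z::'a::euclidean_space) = exp (- (z \<bullet> z) / 2) / sqrt (2 * pi) ^ DIM('a)"
proof -
  have "std_gauss_density z
      = (\<Prod>b\<in>Basis. exp (- (z \<bullet> b)\<^sup>2 / 2)) / (\<Prod>b\<in>(Basis::'a set). sqrt (2 * pi))"
    by (simp add: std_gauss_density_def normal_density_def prod_dividef)
  also have "(\<Prod>b\<in>Basis. exp (- (z \<bullet> b)\<^sup>2 / 2)) = exp (- (z \<bullet> z) / 2)"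
    by (simp add: exp_sum[symmetric] euclidean_inner[of z z] sum_negf sum_divide_distrib
        power2_eq_square)
  finally show ?thesis
    by simp
qed

lemma std_gauss_density_nonneg [simp]: "0 \<le> std_gauss_density z"
  by (simp add: std_gauss_density_def prod_nonneg)

lemma borel_measurable_std_gauss_density [measurable]:
  "std_gauss_density \<in> borel_measurable (borel :: 'a::euclidean_space measure)"
  unfolding std_gauss_density_def[abs_def] by measurable

lemma has_bochner_integral_std_gauss_prod:
  fixes k :: "'a::euclidean_space \<Rightarrow> real \<Rightarrow> real"
  assumes integrable: "\<And>b. b \<in> Basis \<Longrightarrow> integrable lborel (\<lambda>t. std_normal_density t * k b t)"
  shows "has_bochner_integral lborel (\<lambda>z::'a. std_gauss_density z * (\<Prod>b\<in>Basis. k b (z \<bullet> b)))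
           (\<Prod>b\<in>Basis. \<integral>t. std_normal_density t * k b t \<partial>lborel)"
proof -
  define K where "K b t = std_normal_density t * k b t" for b t
  have [measurable]: "K b \<in> borel_measurable borel" if "b \<in> Basis" for b
    using borel_measurable_integrable[OF integrable[OF that]] by (simp add: K_def[abs_def])
  interpret product_sigma_finite "\<lambda>_::'a. lborel :: real measure"
    by (simp add: product_sigma_finite_def lborel.sigma_finite_measure_axioms)
  have integrable_K: "integrable lborel (K b)" if "b \<in> Basis" for b
    using integrable[OF that] by (simp add: K_def[abs_def])
  have "has_bochner_integral (\<Pi>\<^sub>M b\<in>Basis. lborel) (\<lambda>f. \<Prod>b\<in>Basis. K b (f b))
          (\<Prod>b\<in>Basis. \<integral>t. K b t \<partial>lborel)"
    unfolding has_bochner_integral_iff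
    using integrable_K by (simp add: product_integrable_prod product_integral_prod)
  then have "has_bochner_integral (distr (\<Pi>\<^sub>M b\<in>Basis. lborel) borel (\<lambda>f. \<Sum>b\<in>Basis. f b *\<^sub>R b))
      (\<lambda>z::'a. \<Prod>b\<in>Basis. K b (z \<bullet> b)) (\<Prod>b\<in>Basis. \<integral>t. K b t \<partial>lborel)"
    by (intro has_bochner_integral_distr)
      (auto simp: inner_sum_left inner_Basis if_distrib cong: if_cong)
  then show ?thesis
    by (simp add: lborel_eq[symmetric] K_def std_gauss_density_def prod.distrib)
qed

definition std_normal_moment :: "nat \<Rightarrow> real" where
  "std_normal_moment n = (\<integral>t. std_normal_density t * t ^ n \<partial>lborel)"

lemma std_normal_moment_odd_eq_0: "odd n \<Longrightarrow> std_normal_moment n = 0"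
  by (auto simp: std_normal_moment_def elim!: oddE intro: integral_std_normal_moment_odd)

lemma std_normal_moment_simps [simp]:
  "std_normal_moment 0 = 1" "std_normal_moment (Suc 0) = 0" "std_normal_moment (Suc (Suc 0)) = 1"
  "std_normal_moment (Suc (Suc (Suc 0))) = 0" "std_normal_moment (Suc (Suc (Suc (Suc 0)))) = 3"
  using integral_std_normal_moment_even[of 1] integral_std_normal_moment_even[of 2]
  by (simp_all add: std_normal_moment_odd_eq_0)
    (simp_all add: std_normal_moment_def fact_numeral numeral_eq_Suc)

lemma prod_list_inner_eq_prod_Basis_power:
  assumes "set bs \<subseteq> (Basis :: 'a::euclidean_space set)"
  shows "(\<Prod>b\<leftarrow>bs. z \<bullet> b) = (\<Prod>b\<in>Basis. (z \<bullet> b) ^ count_list bs b)"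
  using assms
proof (induction bs)
  case (Cons c bs)
  have "(\<Prod>b\<in>Basis. (z \<bullet> b) ^ count_list (c # bs) b)
      = (\<Prod>b\<in>Basis. (if b = c then z \<bullet> b else 1) * (z \<bullet> b) ^ count_list bs b)"
    by (intro prod.cong) auto
  also have "\<dots> = (z \<bullet> c) * (\<Prod>b\<in>Basis. (z \<bullet> b) ^ count_list bs b)"
    using Cons.prems by (simp add: prod.distrib)
  finally show ?case
    using Cons by simp
qed simp

lemma has_bochner_integral_std_gauss_Basis_moment:
  assumes "set bs \<subseteq> (Basis :: 'a::euclidean_space set)"
  shows "has_bochner_integral lborel (\<lambda>z::'a. std_gauss_density z * (\<Prod>b\<leftarrow>bs. z \<bullet> b))
           (\<Prod>b\<in>Basis. std_normal_moment (count_list bs b))"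
  using has_bochner_integral_std_gauss_prod[of "\<lambda>b t. t ^ count_list bs b"]
  by (simp add: prod_list_inner_eq_prod_Basis_power[OF assms] std_normal_moment_def
      integrable_std_normal_moment)

lemma prod_std_normal_moment_count_odd:
  assumes "set bs \<subseteq> (Basis :: 'a::euclidean_space set)" "odd (length bs)"
  shows "(\<Prod>b\<in>Basis. std_normal_moment (count_list bs b)) = 0"
proof -
  have "(\<Sum>b\<in>Basis. count_list bs b) = length bs"
    using assms(1) by (simp add: sum_count_set)
  then obtain b where "b \<in> Basis" "odd (count_list bs b)"
    using assms(2) by (metis dvd_sum)
  then show ?thesis
    by (metis finite_Basis std_normal_moment_odd_eq_0 prod_zero)
qed

lemma prod_std_normal_moment_count_eq_set:
  assumes "set bs \<subseteq> (Basis :: 'a::euclidean_space set)"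
  shows "(\<Prod>b\<in>Basis. std_normal_moment (count_list bs b))
       = (\<Prod>b\<in>set bs. std_normal_moment (count_list bs b))"
  using assms by (intro prod.mono_neutral_right) (auto simp: count_list_0_iff)

lemma has_bochner_integral_std_gauss_linear_factor:
  fixes Y :: "'a::euclidean_space \<Rightarrow> real" and l :: "'a \<Rightarrow> real"
  assumes "linear l"
    and "\<And>b. b \<in> Basis \<Longrightarrow>
      has_bochner_integral lborel (\<lambda>z. std_gauss_density z * ((z \<bullet> b) * Y z)) (l b)"
  shows "has_bochner_integral lborel (\<lambda>z. std_gauss_density z * ((z \<bullet> p) * Y z)) (l p)"
proof -
  have "has_bochner_integral lborel
      (\<lambda>z. \<Sum>b\<in>Basis. (p \<bullet> b) * (std_gauss_density z * ((z \<bullet> b) * Y z))) (\<Sum>b\<in>Basis. (p \<bullet> b) * l b)"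
    by (intro has_bochner_integral_sum has_bochner_integral_mult_right assms(2))
  moreover have "(\<Sum>b\<in>Basis. (p \<bullet> b) * l b) = l p"
    using Linear_Algebra.linear_componentwise[OF assms(1), of p 1] by simp
  moreover have "(\<Sum>b\<in>Basis. (p \<bullet> b) * (std_gauss_density z * ((z \<bullet> b) * Y z)))
      = std_gauss_density z * ((z \<bullet> p) * Y z)" for z
  proof -
    have "z \<bullet> p = (\<Sum>b\<in>Basis. (p \<bullet> b) * (z \<bullet> b))"
      by (subst euclidean_inner) (simp add: mult.commute)
    then show ?thesis
      by (simp add: sum_distrib_left sum_distrib_right mult_ac)
  qed
  ultimately show ?thesis
    by simp
qed

text \<open>Induction on the number of non-coordinate factors: rotating the list brings a general
  vector to the front, where linearity expands it in the basis.\<close>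

lemma has_bochner_integral_std_gauss_multilinear_moment:
  fixes m :: "'a::euclidean_space list \<Rightarrow> real"
  assumes rotate: "\<And>p ps. length ps + 1 = n \<Longrightarrow> m (ps @ [p]) = m (p # ps)"
    and linear: "\<And>ps. length ps + 1 = n \<Longrightarrow> linear (\<lambda>p. m (p # ps))"
    and Basis: "\<And>bs. length bs = n \<Longrightarrow> set bs \<subseteq> Basis \<Longrightarrow>
      m bs = (\<Prod>b\<in>Basis. std_normal_moment (count_list bs b))"
    and "length ps = n"
  shows "has_bochner_integral lborel (\<lambda>z. std_gauss_density z * (\<Prod>p\<leftarrow>ps. z \<bullet> p)) (m ps)"
proof -
  have "has_bochner_integral lborel (\<lambda>z. std_gauss_density z * (\<Prod>p\<leftarrow>bs @ ps. z \<bullet> p)) (m (bs @ ps))"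
    if "set bs \<subseteq> Basis" "length bs + length ps = n" for bs
    using that
  proof (induction ps arbitrary: bs rule: rev_induct)
    case Nil
    then show ?case
      using Basis has_bochner_integral_std_gauss_Basis_moment by simp
  next
    case (snoc p ps)
    have "has_bochner_integral lborel
        (\<lambda>z. std_gauss_density z * ((z \<bullet> p) * (\<Prod>q\<leftarrow>bs @ ps. z \<bullet> q))) (m (p # bs @ ps))"
    proof (rule has_bochner_integral_std_gauss_linear_factor)
      show "linear (\<lambda>p. m (p # bs @ ps))"
        using linear snoc.prems by simp
      show "has_bochner_integral lborel
          (\<lambda>z. std_gauss_density z * ((z \<bullet> b) * (\<Prod>q\<leftarrow>bs @ ps. z \<bullet> q))) (m (b # bs @ ps))"
        if "b \<in> Basis" for b
        using snoc.IH[of "b # bs"] snoc.prems that by simp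
    qed
    then show ?case
      using rotate[of "bs @ ps" p] snoc.prems by (simp add: mult_ac)
  qed
  from this[of "[]"] show ?thesis
    using assms(4) by simp
qed

lemma has_bochner_integral_std_gauss_odd_moment:
  fixes ps :: "'a::euclidean_space list"
  assumes "odd (length ps)"
  shows "has_bochner_integral lborel (\<lambda>z. std_gauss_density z * (\<Prod>p\<leftarrow>ps. z \<bullet> p)) 0"
proof (rule has_bochner_integral_std_gauss_multilinear_moment[where m="\<lambda>_. 0"])
  show "0 = (\<Prod>b\<in>Basis. std_normal_moment (count_list bs b))"
    if "length bs = length ps" "set bs \<subseteq> Basis" for bs :: "'a list"
    using prod_std_normal_moment_count_odd[OF that(2)] that(1) assms by metis
qed (simp_all add: linear_iff)

lemma has_bochner_integral_std_gauss_inner2: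
  "has_bochner_integral lborel
     (\<lambda>z::'a::euclidean_space. std_gauss_density z * ((z \<bullet> p) * (z \<bullet> q))) (p \<bullet> q)"
proof -
  let ?m = "\<lambda>ps::'a list. ps ! 0 \<bullet> ps ! 1"
  have "has_bochner_integral lborel (\<lambda>z::'a. std_gauss_density z * (\<Prod>p\<leftarrow>[p, q]. z \<bullet> p))
      (?m [p, q])"
  proof (rule has_bochner_integral_std_gauss_multilinear_moment)
    show "?m (ps @ [p]) = ?m (p # ps)" if "length ps + 1 = 2" for p ps
      using that by (auto simp: length_Suc_conv inner_commute)
    show "linear (\<lambda>p. ?m (p # ps))" for ps
      by (simp add: linear_iff inner_add_left)
    show "?m bs = (\<Prod>b\<in>Basis. std_normal_moment (count_list bs b))"
      if "length bs = 2" "set bs \<subseteq> Basis" for bs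
      using that by (subst prod_std_normal_moment_count_eq_set)
        (auto simp: length_Suc_conv numeral_2_eq_2 inner_Basis)
  qed simp
  then show ?thesis
    by simp
qed

definition isserlis4 :: "'a::real_inner \<Rightarrow> 'a \<Rightarrow> 'a \<Rightarrow> 'a \<Rightarrow> real" where
  "isserlis4 p q r s = (p \<bullet> q) * (r \<bullet> s) + (p \<bullet> r) * (q \<bullet> s) + (p \<bullet> s) * (q \<bullet> r)"

lemma isserlis4_Basis:
  assumes "b1 \<in> Basis" "b2 \<in> Basis" "b3 \<in> Basis" "b4 \<in> Basis"
  shows "isserlis4 b1 b2 b3 b4 = (\<Prod>b\<in>Basis. std_normal_moment (count_list [b1, b2, b3, b4] b))"
  using assms
  by (subst prod_std_normal_moment_count_eq_set, simp)
    (cases "b1 = b2"; cases "b1 = b3"; cases "b1 = b4"; cases "b2 = b3"; cases "b2 = b4";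
      cases "b3 = b4"; simp add: isserlis4_def inner_Basis insert_commute)

lemma has_bochner_integral_std_gauss_inner4:
  "has_bochner_integral lborel
     (\<lambda>z::'a::euclidean_space. std_gauss_density z * ((z \<bullet> p) * (z \<bullet> q) * (z \<bullet> r) * (z \<bullet> s)))
     (isserlis4 p q r s)"
proof -
  let ?m = "\<lambda>ps::'a list. isserlis4 (ps ! 0) (ps ! 1) (ps ! 2) (ps ! 3)"
  have "has_bochner_integral lborel (\<lambda>z::'a. std_gauss_density z * (\<Prod>p\<leftarrow>[p, q, r, s]. z \<bullet> p))
      (?m [p, q, r, s])"
  proof (rule has_bochner_integral_std_gauss_multilinear_moment)
    show "?m (ps @ [p]) = ?m (p # ps)" if "length ps + 1 = 4" for p ps
      using that by (auto simp: length_Suc_conv numeral_eq_Suc isserlis4_def inner_commute)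
    show "linear (\<lambda>p. ?m (p # ps))" for ps
      by (simp add: linear_iff isserlis4_def algebra_simps)
    show "?m bs = (\<Prod>b\<in>Basis. std_normal_moment (count_list bs b))"
      if "length bs = 4" "set bs \<subseteq> Basis" for bs
      using that isserlis4_Basis by (auto simp: length_Suc_conv numeral_eq_Suc)
  qed simp
  then show ?thesis
    by (simp add: mult_ac)
qed

lemma has_bochner_integral_std_gauss_norm_factor:
  fixes Y :: "'a::euclidean_space \<Rightarrow> real"
  assumes "\<And>b. b \<in> Basis \<Longrightarrow>
      has_bochner_integral lborel (\<lambda>z. std_gauss_density z * ((z \<bullet> b) * (z \<bullet> b) * Y z)) (F b)"
  shows "has_bochner_integral lborel (\<lambda>z. std_gauss_density z * ((z \<bullet> z) * Y z)) (\<Sum>b\<in>Basis. F b)"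
proof -
  have "has_bochner_integral lborel
      (\<lambda>z. \<Sum>b\<in>Basis. std_gauss_density z * ((z \<bullet> b) * (z \<bullet> b) * Y z)) (\<Sum>b\<in>Basis. F b)"
    by (intro has_bochner_integral_sum assms)
  moreover have "(\<Sum>b\<in>Basis. std_gauss_density z * ((z \<bullet> b) * (z \<bullet> b) * Y z))
      = std_gauss_density z * ((z \<bullet> z) * Y z)" for z
    by (simp add: euclidean_inner[of z z] sum_distrib_left sum_distrib_right mult_ac)
  ultimately show ?thesis
    by simp
qed

lemma has_bochner_integral_std_gauss_norm2:
  "has_bochner_integral lborel (\<lambda>z::'a::euclidean_space. std_gauss_density z * (z \<bullet> z)) DIM('a)"
proof -
  have "has_bochner_integral lborel (\<lambda>z::'a. std_gauss_density z * ((z \<bullet> z) * 1))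
      (\<Sum>b\<in>(Basis::'a set). b \<bullet> b)"
  proof (rule has_bochner_integral_std_gauss_norm_factor)
    fix b :: 'a
    show "has_bochner_integral lborel (\<lambda>z. std_gauss_density z * ((z \<bullet> b) * (z \<bullet> b) * 1)) (b \<bullet> b)"
      using has_bochner_integral_std_gauss_inner2[of b b] by simp
  qed
  then show ?thesis
    by simp
qed

lemma has_bochner_integral_std_gauss_norm2_inner:
  "has_bochner_integral lborel
     (\<lambda>z::'a::euclidean_space. std_gauss_density z * ((z \<bullet> z) * (z \<bullet> p))) 0"
  using has_bochner_integral_std_gauss_norm_factor[of "\<lambda>z. z \<bullet> p" "\<lambda>_. 0"]
    has_bochner_integral_std_gauss_odd_moment[of "[b, b, p]" for b] by (simp add: mult_ac)

lemma has_bochner_integral_std_gauss_norm2_inner2: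
  "has_bochner_integral lborel
     (\<lambda>z::'a::euclidean_space. std_gauss_density z * ((z \<bullet> z) * ((z \<bullet> p) * (z \<bullet> q))))
     ((real DIM('a) + 2) * (p \<bullet> q))"
proof -
  have "has_bochner_integral lborel
      (\<lambda>z::'a. std_gauss_density z * ((z \<bullet> z) * ((z \<bullet> p) * (z \<bullet> q)))) (\<Sum>b\<in>Basis. isserlis4 b b p q)"
    using has_bochner_integral_std_gauss_inner4
    by (intro has_bochner_integral_std_gauss_norm_factor) (simp add: mult_ac)
  moreover have "(\<Sum>b\<in>(Basis::'a set). isserlis4 b b p q) = (real DIM('a) + 2) * (p \<bullet> q)"
    by (simp add: isserlis4_def sum.distrib sum_distrib_left sum_distrib_right euclidean_inner[of p q]
        inner_commute algebra_simps)
  ultimately show ?thesis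
    by simp
qed

lemma has_bochner_integral_std_gauss_norm4:
  "has_bochner_integral lborel (\<lambda>z::'a::euclidean_space. std_gauss_density z * ((z \<bullet> z) * (z \<bullet> z)))
     (real DIM('a) * (real DIM('a) + 2))"
proof -
  have "has_bochner_integral lborel (\<lambda>z::'a. std_gauss_density z * ((z \<bullet> z) * (z \<bullet> z)))
      (\<Sum>b\<in>(Basis::'a set). real DIM('a) + 2)"
  proof (rule has_bochner_integral_std_gauss_norm_factor)
    fix b :: 'a
    assume "b \<in> Basis"
    then show "has_bochner_integral lborel (\<lambda>z. std_gauss_density z * ((z \<bullet> b) * (z \<bullet> b) * (z \<bullet> z)))
        (real DIM('a) + 2)"
      using has_bochner_integral_std_gauss_norm2_inner2[of b b] by (simp add: inner_Basis mult_ac)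
  qed
  then show ?thesis
    by (simp add: mult.commute)
qed

lemma has_bochner_integral_std_gauss_density:
  "has_bochner_integral lborel (std_gauss_density :: 'a::euclidean_space \<Rightarrow> real) 1"
  using has_bochner_integral_std_gauss_Basis_moment[of "[] :: 'a list"] by simp

text \<open>\<open>x\<^sup>T M x\<close> for the ansatz matrix \<open>M = \<alpha> w w\<^sup>T + \<beta> v v\<^sup>T + \<gamma> (I - w w\<^sup>T - v v\<^sup>T)\<close>.\<close>

definition ansatz_form :: "'a::real_inner \<Rightarrow> 'a \<Rightarrow> real \<Rightarrow> real \<Rightarrow> real \<Rightarrow> 'a \<Rightarrow> real" where
  "ansatz_form w v \<alpha> \<beta> \<gamma> x = \<alpha> * (x \<bullet> w)\<^sup>2 + \<beta> * (x \<bullet> v)\<^sup>2 + \<gamma> * (x \<bullet> x - (x \<bullet> w)\<^sup>2 - (x \<bullet> v)\<^sup>2)"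

context
  fixes w v :: "'a::euclidean_space"
  assumes orthonormal: "w \<bullet> w = 1" "v \<bullet> v = 1" "w \<bullet> v = 0"
begin

lemma ansatz_form_add_scaleR:
  "ansatz_form w v e1 e2 e3 (z + s *\<^sub>R v) = ansatz_form w v e1 e2 e3 z + e2 * (2 * s * (z \<bullet> v) + s\<^sup>2)"
  using orthonormal
  by (simp add: ansatz_form_def inner_commute power2_eq_square algebra_simps)

lemma has_bochner_integral_std_gauss_ansatz_form:
  "has_bochner_integral lborel (\<lambda>z. std_gauss_density z * ansatz_form w v e1 e2 e3 z)
     (e1 + e2 + (real DIM('a) - 2) * e3)"
proof -
  have "has_bochner_integral lborel (\<lambda>z.
        (e1 - e3) * (std_gauss_density z * ((z \<bullet> w) * (z \<bullet> w)))
      + (e2 - e3) * (std_gauss_density z * ((z \<bullet> v) * (z \<bullet> v)))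
      + e3 * (std_gauss_density z * (z \<bullet> z)))
      ((e1 - e3) * (w \<bullet> w) + (e2 - e3) * (v \<bullet> v) + e3 * DIM('a))"
    by (intro has_bochner_integral_add has_bochner_integral_mult_right
        has_bochner_integral_std_gauss_inner2 has_bochner_integral_std_gauss_norm2)
  then show ?thesis
    by (rule has_bochner_integral_cong[THEN iffD1, rotated 3])
      (simp_all add: orthonormal ansatz_form_def power2_eq_square algebra_simps)
qed

lemma has_bochner_integral_std_gauss_ansatz_form_inner:
  "has_bochner_integral lborel (\<lambda>z. std_gauss_density z * (ansatz_form w v e1 e2 e3 z * (z \<bullet> v))) 0"
proof -
  have "has_bochner_integral lborel (\<lambda>z.
        (e1 - e3) * (std_gauss_density z * (\<Prod>p\<leftarrow>[w, w, v]. z \<bullet> p))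
      + (e2 - e3) * (std_gauss_density z * (\<Prod>p\<leftarrow>[v, v, v]. z \<bullet> p))
      + e3 * (std_gauss_density z * ((z \<bullet> z) * (z \<bullet> v))))
      ((e1 - e3) * 0 + (e2 - e3) * 0 + e3 * 0)"
    by (intro has_bochner_integral_add has_bochner_integral_mult_right
        has_bochner_integral_std_gauss_odd_moment has_bochner_integral_std_gauss_norm2_inner) simp_all
  then show ?thesis
    by (rule has_bochner_integral_cong[THEN iffD1, rotated 3])
      (simp_all add: ansatz_form_def power2_eq_square algebra_simps)
qed

lemma has_bochner_integral_std_gauss_ansatz_form_square:
  "has_bochner_integral lborel (\<lambda>z. std_gauss_density z * (ansatz_form w v e1 e2 e3 z)\<^sup>2)
     ((e1 + e2 + (real DIM('a) - 2) * e3)\<^sup>2 + 2 * (e1\<^sup>2 + e2\<^sup>2 + (real DIM('a) - 2) * e3\<^sup>2))"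
proof -
  let ?g = std_gauss_density and ?D = "real DIM('a)"
  have "has_bochner_integral lborel (\<lambda>z.
        (e1 - e3)\<^sup>2 * (?g z * ((z \<bullet> w) * (z \<bullet> w) * (z \<bullet> w) * (z \<bullet> w)))
      + (e2 - e3)\<^sup>2 * (?g z * ((z \<bullet> v) * (z \<bullet> v) * (z \<bullet> v) * (z \<bullet> v)))
      + e3\<^sup>2 * (?g z * ((z \<bullet> z) * (z \<bullet> z)))
      + (2 * (e1 - e3) * (e2 - e3)) * (?g z * ((z \<bullet> w) * (z \<bullet> w) * (z \<bullet> v) * (z \<bullet> v)))
      + (2 * (e1 - e3) * e3) * (?g z * ((z \<bullet> z) * ((z \<bullet> w) * (z \<bullet> w))))
      + (2 * (e2 - e3) * e3) * (?g z * ((z \<bullet> z) * ((z \<bullet> v) * (z \<bullet> v)))))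
      ((e1 - e3)\<^sup>2 * isserlis4 w w w w + (e2 - e3)\<^sup>2 * isserlis4 v v v v + e3\<^sup>2 * (?D * (?D + 2))
      + (2 * (e1 - e3) * (e2 - e3)) * isserlis4 w w v v
      + (2 * (e1 - e3) * e3) * ((?D + 2) * (w \<bullet> w))
      + (2 * (e2 - e3) * e3) * ((?D + 2) * (v \<bullet> v)))"
    by (intro has_bochner_integral_add has_bochner_integral_mult_right
        has_bochner_integral_std_gauss_inner4 has_bochner_integral_std_gauss_norm4
        has_bochner_integral_std_gauss_norm2_inner2)
  then show ?thesis
    by (rule has_bochner_integral_cong[THEN iffD1, rotated 3])
      (simp_all add: orthonormal isserlis4_def ansatz_form_def power2_eq_square algebra_simps)
qed

lemma has_bochner_integral_std_gauss_ansatz_form_shift_square: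
  fixes e1 e2 e3 s :: real
  defines "\<tau> \<equiv> e1 + e2 + (real DIM('a) - 2) * e3"
  shows "has_bochner_integral lborel
     (\<lambda>z. std_gauss_density z * (ansatz_form w v e1 e2 e3 (z + s *\<^sub>R v))\<^sup>2)
     (\<tau>\<^sup>2 + 2 * (e1\<^sup>2 + e2\<^sup>2 + (real DIM('a) - 2) * e3\<^sup>2) + (2 * e2 * \<tau> + 4 * e2\<^sup>2) * s\<^sup>2 + e2\<^sup>2 * s ^ 4)"
proof -
  let ?g = std_gauss_density and ?q = "ansatz_form w v e1 e2 e3"
  have "has_bochner_integral lborel (\<lambda>z.
        ?g z * (?q z)\<^sup>2 + (2 * e2 * s\<^sup>2) * (?g z * ?q z) + (4 * e2 * s) * (?g z * (?q z * (z \<bullet> v)))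
      + (4 * e2\<^sup>2 * s\<^sup>2) * (?g z * ((z \<bullet> v) * (z \<bullet> v)))
      + (4 * e2\<^sup>2 * s ^ 3) * (?g z * (\<Prod>p\<leftarrow>[v]. z \<bullet> p)) + (e2\<^sup>2 * s ^ 4) * ?g z)
      (\<tau>\<^sup>2 + 2 * (e1\<^sup>2 + e2\<^sup>2 + (real DIM('a) - 2) * e3\<^sup>2) + (2 * e2 * s\<^sup>2) * \<tau> + (4 * e2 * s) * 0
      + (4 * e2\<^sup>2 * s\<^sup>2) * (v \<bullet> v) + (4 * e2\<^sup>2 * s ^ 3) * 0 + (e2\<^sup>2 * s ^ 4) * 1)"
    unfolding \<tau>_def
    by (intro has_bochner_integral_add has_bochner_integral_mult_right
        has_bochner_integral_std_gauss_ansatz_form_square has_bochner_integral_std_gauss_ansatz_form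
        has_bochner_integral_std_gauss_ansatz_form_inner has_bochner_integral_std_gauss_inner2
        has_bochner_integral_std_gauss_odd_moment has_bochner_integral_std_gauss_density) simp
  then show ?thesis
    by (rule has_bochner_integral_cong[THEN iffD1, rotated 3])
      (simp_all add: orthonormal ansatz_form_add_scaleR power2_eq_square power3_eq_cube power4_eq_xxxx
        algebra_simps)
qed

end

section \<open>The Gaussian law with covariance \<open>I + c v v\<^sup>T\<close>\<close>

lemma outer_mult_vector: "outer u w *v x = (w \<bullet> x) *\<^sub>R u"
  by (simp add: vec_eq_iff outer_def matrix_vector_mult_def inner_vec_def sum_distrib_left mult_ac)

lemma scaleR_matrix_mult_vector: "(c *\<^sub>R A) *v x = c *\<^sub>R (A *v (x :: real^'n))"
  by (simp add: scaleR_matrix_vector_assoc)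

lemma matrix_inv_eqI:
  fixes A B :: "'a::semiring_1^'n^'n"
  assumes AB: "A ** B = mat 1" and BA: "B ** A = mat 1"
  shows "matrix_inv A = B"
proof -
  have inv: "matrix_inv A ** A = mat 1"
    unfolding matrix_inv_def using someI_ex[of "\<lambda>A'. A ** A' = mat 1 \<and> A' ** A = mat 1"] AB BA
    by blast
  have "matrix_inv A = matrix_inv A ** (A ** B)"
    by (simp add: AB)
  also have "\<dots> = (matrix_inv A ** A) ** B"
    by (simp add: matrix_mul_assoc)
  finally show ?thesis
    by (simp add: inv)
qed

lemma mat1_plus_outer_mult:
  fixes v :: "real^'n"
  assumes "v \<bullet> v = 1"
  shows "(mat 1 + a *\<^sub>R outer v v) ** (mat 1 + b *\<^sub>R outer v v) = mat 1 + (a + b + a * b) *\<^sub>R outer v v"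
proof (rule iffD2[OF matrix_eq], intro allI)
  fix x :: "real^'n"
  show "(mat 1 + a *\<^sub>R outer v v) ** (mat 1 + b *\<^sub>R outer v v) *v x
      = (mat 1 + (a + b + a * b) *\<^sub>R outer v v) *v x"
    using assms by (simp add: matrix_vector_mul_assoc[symmetric] outer_mult_vector
        scaleR_matrix_mult_vector algebra_simps)
qed

lemma matrix_inv_rank_one:
  fixes v :: "real^'n"
  assumes "v \<bullet> v = 1" and "1 + c \<noteq> 0"
  shows "matrix_inv (mat 1 + c *\<^sub>R outer v v) = mat 1 - (c / (1 + c)) *\<^sub>R outer v v"
proof -
  have "mat 1 - (c / (1 + c)) *\<^sub>R outer v v = mat 1 + (- c / (1 + c)) *\<^sub>R outer v v"
    by simp
  moreover have "c + - c / (1 + c) + c * (- c / (1 + c)) = 0"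
    and "- c / (1 + c) + c + - c / (1 + c) * c = 0"
    using assms(2) by (simp_all add: field_simps)
  ultimately show ?thesis
    by (simp only: matrix_inv_eqI mat1_plus_outer_mult[OF assms(1)] scaleR_zero_left add_0_right)
qed

lemma det_mat1_plus_outer_axis:
  "det (mat 1 + c *\<^sub>R outer (axis k 1) (axis k 1) :: real^'n^'n) = 1 + c"
proof -
  have "det (mat 1 + c *\<^sub>R outer (axis k 1) (axis k 1) :: real^'n^'n)
      = (\<Prod>i\<in>UNIV. (mat 1 + c *\<^sub>R outer (axis k 1) (axis k 1) :: real^'n^'n) $ i $ i)"
    by (rule det_diagonal) (auto simp: mat_def outer_def axis_def)
  also have "\<dots> = (\<Prod>i\<in>UNIV. if i = k then 1 + c else 1)"
    by (intro prod.cong) (simp_all add: mat_def outer_def axis_def)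
  finally show ?thesis
    by simp
qed

lemma det_rank_one:
  fixes v :: "real^'n"
  assumes "v \<bullet> v = 1"
  shows "det (mat 1 + c *\<^sub>R outer v v) = 1 + c"
proof -
  fix k :: 'n
  obtain A where A: "orthogonal_matrix A" "A *v axis k 1 = v"
    using orthogonal_matrix_exists_basis assms by (metis norm_eq_1)
  define e :: "real^'n" where "e = axis k 1"
  have AtA: "transpose A ** A = mat 1"
    using A(1) by (simp add: orthogonal_matrix_def)
  have Atv: "transpose A *v v = e"
    unfolding e_def A(2)[symmetric] matrix_vector_mul_assoc AtA by simp
  have v_A: "v \<bullet> (A *v x) = e \<bullet> x" for x
    by (metis Atv dot_lmul_matrix transpose_transpose vector_transpose_matrix)
  have "transpose A ** (mat 1 + c *\<^sub>R outer v v) ** A = mat 1 + c *\<^sub>R outer e e"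
  proof (rule iffD2[OF matrix_eq], intro allI)
    fix x :: "real^'n"
    have "(transpose A ** (mat 1 + c *\<^sub>R outer v v) ** A) *v x
        = transpose A *v ((mat 1 + c *\<^sub>R outer v v) *v (A *v x))"
      by (simp only: matrix_vector_mul_assoc matrix_mul_assoc)
    also have "\<dots> = transpose A *v (A *v x) + (c * (v \<bullet> (A *v x))) *\<^sub>R (transpose A *v v)"
      by (simp only: outer_mult_vector scaleR_matrix_mult_vector matrix_vector_mult_add_rdistrib
          matrix_vector_mul_lid matrix_vector_right_distrib matrix_vector_mult_scaleR scaleR_scaleR)
    also have "\<dots> = (mat 1 + c *\<^sub>R outer e e) *v x"
      by (simp only: v_A Atv matrix_vector_mul_assoc AtA outer_mult_vector scaleR_matrix_mult_vector
          matrix_vector_mult_add_rdistrib matrix_vector_mul_lid scaleR_scaleR)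
    finally show "(transpose A ** (mat 1 + c *\<^sub>R outer v v) ** A) *v x = (mat 1 + c *\<^sub>R outer e e) *v x" .
  qed
  then have "det (transpose A ** (mat 1 + c *\<^sub>R outer v v) ** A) = 1 + c"
    using det_mat1_plus_outer_axis[of c k] by (simp add: e_def)
  then have "det A * det A * det (mat 1 + c *\<^sub>R outer v v) = 1 + c"
    by (simp add: det_mul mult_ac)
  moreover have "det A * det A = 1"
    using det_orthogonal_matrix[OF A(1)] by auto
  ultimately show ?thesis
    by simp
qed

lemma gauss_density_rank_one_eq:
  fixes v :: "real^'n"
  assumes v: "v \<bullet> v = 1" and c: "c > 0"
  shows "gauss_density (mat 1 + c *\<^sub>R outer v v) x
    = exp (- (x \<bullet> x - c / (1 + c) * (x \<bullet> v)\<^sup>2) / 2) / sqrt ((2 * pi) ^ CARD('n) * (1 + c))"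
proof -
  have "x \<bullet> (matrix_inv (mat 1 + c *\<^sub>R outer v v) *v x) = x \<bullet> x - c / (1 + c) * (x \<bullet> v)\<^sup>2"
    using c by (simp add: matrix_inv_rank_one[OF v] outer_mult_vector scaleR_matrix_mult_vector
        algebra_simps power2_eq_square inner_commute)
  then show ?thesis
    by (simp add: gauss_density_def det_rank_one[OF v])
qed

lemma gauss_density_rank_one_nonneg:
  fixes v :: "real^'n"
  shows "v \<bullet> v = 1 \<Longrightarrow> c > 0 \<Longrightarrow> 0 \<le> gauss_density (mat 1 + c *\<^sub>R outer v v) x"
  by (simp add: gauss_density_rank_one_eq)

lemma borel_measurable_gauss_density_rank_one:
  fixes v :: "real^'n"
  assumes "v \<bullet> v = 1" and "c > 0"
  shows "gauss_density (mat 1 + c *\<^sub>R outer v v) \<in> borel_measurable borel"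
  by (simp add: gauss_density_rank_one_eq[OF assms] cong: measurable_cong)

lemma std_gauss_density_diff_scaleR:
  fixes x v :: "'a::euclidean_space"
  assumes "v \<bullet> v = 1"
  shows "std_gauss_density (x - s *\<^sub>R v)
    = exp (- (x \<bullet> x - (x \<bullet> v)\<^sup>2) / 2) / sqrt (2 * pi) ^ (DIM('a) - 1)
      * std_normal_density ((x \<bullet> v) - s)"
proof -
  have D: "sqrt (2 * pi) ^ DIM('a) = sqrt (2 * pi) ^ (DIM('a) - 1) * sqrt (2 * pi)"
    by (metis DIM_positive Suc_diff_1 mult.commute power_Suc)
  have e: "- ((x - s *\<^sub>R v) \<bullet> (x - s *\<^sub>R v)) / 2
      = - (x \<bullet> x - (x \<bullet> v)\<^sup>2) / 2 + - ((x \<bullet> v) - s)\<^sup>2 / 2"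
    using assms by (simp add: inner_diff_left inner_diff_right inner_commute power2_eq_square
        field_simps)
  show ?thesis
    unfolding std_gauss_density_eq D e exp_add by (simp add: normal_density_def)
qed

lemma gauss_density_rank_one_convolution:
  fixes v :: "real^'n"
  assumes v: "v \<bullet> v = 1" and c: "c > 0"
  shows "(\<integral>\<^sup>+ s. ennreal (std_gauss_density (x - s *\<^sub>R v) * normal_density 0 (sqrt c) s) \<partial>lborel)
    = ennreal (gauss_density (mat 1 + c *\<^sub>R outer v v) x)"
proof -
  define C where "C = exp (- (x \<bullet> x - (x \<bullet> v)\<^sup>2) / 2) / sqrt (2 * pi) ^ (CARD('n) - 1)"
  have "(\<integral>\<^sup>+ s. ennreal (std_gauss_density (x - s *\<^sub>R v) * normal_density 0 (sqrt c) s) \<partial>lborel)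
      = (\<integral>\<^sup>+ s. ennreal C * ennreal (normal_density 0 1 ((x \<bullet> v) - s) * normal_density 0 (sqrt c) s)
          \<partial>lborel)"
    by (intro nn_integral_cong)
      (simp add: std_gauss_density_diff_scaleR[OF v] C_def ennreal_mult'[symmetric] mult.assoc)
  also have "\<dots> = ennreal C
      * (\<integral>\<^sup>+ s. ennreal (normal_density 0 1 ((x \<bullet> v) - s) * normal_density 0 (sqrt c) s) \<partial>lborel)"
    by (rule nn_integral_cmult) simp
  also have "(\<integral>\<^sup>+ s. ennreal (normal_density 0 1 ((x \<bullet> v) - s) * normal_density 0 (sqrt c) s) \<partial>lborel)
      = ennreal (normal_density 0 (sqrt (1 + c)) (x \<bullet> v))"
    using fun_cong[OF conv_normal_density_zero_mean[of 1 "sqrt c"], of "x \<bullet> v"] c by simp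
  also have "ennreal C * ennreal (normal_density 0 (sqrt (1 + c)) (x \<bullet> v))
      = ennreal (gauss_density (mat 1 + c *\<^sub>R outer v v) x)"
  proof -
    have D: "sqrt ((2 * pi) ^ CARD('n) * (1 + c))
        = sqrt (2 * pi) ^ (CARD('n) - 1) * sqrt (2 * pi * (1 + c))"
      by (metis zero_less_card_finite Suc_diff_1 mult.assoc mult.commute power_Suc real_sqrt_mult
          real_sqrt_power)
    have e: "- (x \<bullet> x - c / (1 + c) * (x \<bullet> v)\<^sup>2) / 2
        = - (x \<bullet> x - (x \<bullet> v)\<^sup>2) / 2 + - ((x \<bullet> v) - 0)\<^sup>2 / (2 * (sqrt (1 + c))\<^sup>2)"
      using c by (simp add: field_simps)
    have "C * normal_density 0 (sqrt (1 + c)) (x \<bullet> v) = gauss_density (mat 1 + c *\<^sub>R outer v v) x"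
      unfolding gauss_density_rank_one_eq[OF v c] D e exp_add C_def normal_density_def
      using c by (simp add: field_simps)
    then show ?thesis
      by (simp add: C_def ennreal_mult'[symmetric])
  qed
  finally show ?thesis .
qed

lemma nn_integral_gauss_density_rank_one:
  fixes v :: "real^'n" and f :: "real^'n \<Rightarrow> real"
  assumes v: "v \<bullet> v = 1" and c: "c > 0"
    and [measurable]: "f \<in> borel_measurable borel" and f_nonneg: "\<And>x. 0 \<le> f x"
  shows "(\<integral>\<^sup>+ x. ennreal (gauss_density (mat 1 + c *\<^sub>R outer v v) x * f x) \<partial>lborel)
    = (\<integral>\<^sup>+ s. ennreal (normal_density 0 (sqrt c) s)
          * (\<integral>\<^sup>+ z. ennreal (std_gauss_density z * f (z + s *\<^sub>R v)) \<partial>lborel) \<partial>lborel)"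
proof -
  let ?n = "normal_density 0 (sqrt c)"
  have "(\<integral>\<^sup>+ x. ennreal (gauss_density (mat 1 + c *\<^sub>R outer v v) x * f x) \<partial>lborel)
      = (\<integral>\<^sup>+ x. (\<integral>\<^sup>+ s. ennreal (std_gauss_density (x - s *\<^sub>R v) * ?n s) \<partial>lborel) * ennreal (f x)
          \<partial>lborel)"
    by (intro nn_integral_cong, subst gauss_density_rank_one_convolution[OF v c])
      (rule ennreal_mult''[OF f_nonneg])
  also have "\<dots> = (\<integral>\<^sup>+ x. (\<integral>\<^sup>+ s. ennreal (std_gauss_density (x - s *\<^sub>R v) * ?n s * f x) \<partial>lborel)
      \<partial>lborel)"
    by (intro nn_integral_cong, subst nn_integral_multc[symmetric])
      (auto simp: ennreal_mult'' f_nonneg intro!: nn_integral_cong)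
  also have "\<dots> = (\<integral>\<^sup>+ s. (\<integral>\<^sup>+ x. ennreal (std_gauss_density (x - s *\<^sub>R v) * ?n s * f x) \<partial>lborel)
      \<partial>lborel)"
    by (rule lborel_pair.Fubini') measurable
  also have "\<dots> = (\<integral>\<^sup>+ s. ennreal (?n s)
      * (\<integral>\<^sup>+ z. ennreal (std_gauss_density z * f (z + s *\<^sub>R v)) \<partial>lborel) \<partial>lborel)"
  proof (intro nn_integral_cong)
    fix s :: real
    have "(\<integral>\<^sup>+ x. ennreal (std_gauss_density (x - s *\<^sub>R v) * ?n s * f x) \<partial>lborel)
        = ennreal (?n s) * (\<integral>\<^sup>+ x. ennreal (std_gauss_density (x - s *\<^sub>R v) * f x) \<partial>lborel)"
      by (subst nn_integral_cmult[symmetric])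
        (auto simp: ennreal_mult'[symmetric] f_nonneg mult_ac intro!: nn_integral_cong)
    also have "(\<integral>\<^sup>+ x. ennreal (std_gauss_density (x - s *\<^sub>R v) * f x) \<partial>lborel)
        = (\<integral>\<^sup>+ x. ennreal (std_gauss_density (x - s *\<^sub>R v) * f x) \<partial>distr lborel borel ((+) (s *\<^sub>R v)))"
      by (simp add: lborel_distr_plus)
    also have "\<dots> = (\<integral>\<^sup>+ z. ennreal (std_gauss_density z * f (z + s *\<^sub>R v)) \<partial>lborel)"
      by (subst nn_integral_distr) (auto simp: add.commute)
    finally show "(\<integral>\<^sup>+ x. ennreal (std_gauss_density (x - s *\<^sub>R v) * ?n s * f x) \<partial>lborel)
        = ennreal (?n s) * (\<integral>\<^sup>+ z. ennreal (std_gauss_density z * f (z + s *\<^sub>R v)) \<partial>lborel)" .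
  qed
  finally show ?thesis .
qed

lemma nn_integral_eq_has_bochner_integral:
  "has_bochner_integral M f x \<Longrightarrow> (\<And>y. 0 \<le> f y) \<Longrightarrow> (\<integral>\<^sup>+ y. ennreal (f y) \<partial>M) = ennreal x"
  by (metis AE_I2 has_bochner_integral_iff nn_integral_eq_integral)

lemma has_bochner_integral_nonneg:
  "has_bochner_integral M f x \<Longrightarrow> (\<And>y. 0 \<le> f y) \<Longrightarrow> 0 \<le> (x :: real)"
  by (metis AE_I2 has_bochner_integral_integral_eq integral_nonneg_AE)

lemma has_bochner_integral_gauss_density_rank_one:
  fixes v :: "real^'n" and f :: "real^'n \<Rightarrow> real"
  assumes v: "v \<bullet> v = 1" and c: "c > 0"
    and f_measurable [measurable]: "f \<in> borel_measurable borel" and f_nonneg: "\<And>x. 0 \<le> f x"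
    and K: "\<And>s. has_bochner_integral lborel (\<lambda>z. std_gauss_density z * f (z + s *\<^sub>R v)) (K s)"
    and L: "has_bochner_integral lborel (\<lambda>s. normal_density 0 (sqrt c) s * K s) L"
  shows "has_bochner_integral (density lborel (gauss_density (mat 1 + c *\<^sub>R outer v v))) f L"
proof -
  let ?g = "gauss_density (mat 1 + c *\<^sub>R outer v v)" and ?n = "normal_density 0 (sqrt c)"
  have [measurable]: "?g \<in> borel_measurable borel"
    using v c by (rule borel_measurable_gauss_density_rank_one)
  have K_nonneg: "0 \<le> K s" for s
    using K by (rule has_bochner_integral_nonneg) (simp add: f_nonneg)
  have L_nonneg: "0 \<le> L"
    using L by (rule has_bochner_integral_nonneg) (simp add: K_nonneg)
  have "(\<integral>\<^sup>+ x. ennreal (?g x * f x) \<partial>lborel)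
      = (\<integral>\<^sup>+ s. ennreal (?n s) * (\<integral>\<^sup>+ z. ennreal (std_gauss_density z * f (z + s *\<^sub>R v)) \<partial>lborel)
          \<partial>lborel)"
    by (rule nn_integral_gauss_density_rank_one[OF v c f_measurable f_nonneg])
  also have "\<dots> = (\<integral>\<^sup>+ s. ennreal (?n s) * ennreal (K s) \<partial>lborel)"
    using nn_integral_eq_has_bochner_integral[OF K] f_nonneg by simp
  also have "\<dots> = (\<integral>\<^sup>+ s. ennreal (?n s * K s) \<partial>lborel)"
    by (simp add: ennreal_mult''[OF K_nonneg])
  also have "\<dots> = ennreal L"
    using L K_nonneg by (simp add: nn_integral_eq_has_bochner_integral)
  finally have "has_bochner_integral lborel (\<lambda>x. ?g x * f x) L"
    using L_nonneg v c f_nonneg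
    by (intro has_bochner_integral_nn_integral) (auto simp: gauss_density_rank_one_nonneg)
  then show ?thesis
    using v c by (intro has_bochner_integral_density) (auto simp: gauss_density_rank_one_nonneg)
qed

lemma has_bochner_integral_normal_even_poly:
  assumes "c > 0"
  shows "has_bochner_integral lborel
     (\<lambda>s. normal_density 0 (sqrt c) s * (a0 + a2 * s\<^sup>2 + a4 * s ^ 4)) (a0 + a2 * c + 3 * a4 * c\<^sup>2)"
proof -
  let ?n = "normal_density 0 (sqrt c)"
  have "has_bochner_integral lborel ?n 1"
    using assms by (simp add: has_bochner_integral_iff)
  moreover have "has_bochner_integral lborel (\<lambda>s. ?n s * s\<^sup>2) c"
    using normal_moment_even[of "sqrt c" 0 1] assms by simp
  moreover have "has_bochner_integral lborel (\<lambda>s. ?n s * s ^ 4) (3 * c\<^sup>2)"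
    using normal_moment_even[of "sqrt c" 0 2] assms by (simp add: fact_numeral power2_eq_square)
  ultimately have "has_bochner_integral lborel
      (\<lambda>s. a0 * ?n s + a2 * (?n s * s\<^sup>2) + a4 * (?n s * s ^ 4)) (a0 * 1 + a2 * c + a4 * (3 * c\<^sup>2))"
    by (intro has_bochner_integral_add has_bochner_integral_mult_right)
  then show ?thesis
    by (rule has_bochner_integral_cong[THEN iffD1, rotated 3]) (simp_all add: algebra_simps)
qed

lemma has_bochner_integral_gauss_density_rank_one_const:
  fixes v :: "real^'n"
  assumes "v \<bullet> v = 1" and "c > 0"
  shows "has_bochner_integral (density lborel (gauss_density (mat 1 + c *\<^sub>R outer v v))) (\<lambda>_. 1::real) 1"
proof (rule has_bochner_integral_gauss_density_rank_one)
  show "has_bochner_integral lborel (\<lambda>s. normal_density 0 (sqrt c) s * 1) 1"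
    using has_bochner_integral_normal_even_poly[of c 1 0 0] assms by simp
qed (simp_all add: assms has_bochner_integral_std_gauss_density)

lemma has_bochner_integral_gauss_density_rank_one_ansatz_form_square:
  fixes w v :: "real^'n" and e1 e2 e3 :: real
  assumes w: "w \<bullet> w = 1" and v: "v \<bullet> v = 1" and wv: "w \<bullet> v = 0" and c: "c > 0"
  shows "has_bochner_integral (density lborel (gauss_density (mat 1 + c *\<^sub>R outer v v)))
     (\<lambda>x. (ansatz_form w v e1 e2 e3 x)\<^sup>2)
     ((e1 + (1 + c) * e2 + (real CARD('n) - 2) * e3)\<^sup>2
       + 2 * (e1\<^sup>2 + (1 + c)\<^sup>2 * e2\<^sup>2 + (real CARD('n) - 2) * e3\<^sup>2))"
proof (rule has_bochner_integral_gauss_density_rank_one)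
  define \<tau> where "\<tau> = e1 + e2 + (real CARD('n) - 2) * e3"
  show "has_bochner_integral lborel (\<lambda>z. std_gauss_density z * (ansatz_form w v e1 e2 e3 (z + s *\<^sub>R v))\<^sup>2)
      (\<tau>\<^sup>2 + 2 * (e1\<^sup>2 + e2\<^sup>2 + (real CARD('n) - 2) * e3\<^sup>2) + (2 * e2 * \<tau> + 4 * e2\<^sup>2) * s\<^sup>2
        + e2\<^sup>2 * s ^ 4)" for s
    using has_bochner_integral_std_gauss_ansatz_form_shift_square[OF w v wv] by (simp add: \<tau>_def)
  show "has_bochner_integral lborel (\<lambda>s. normal_density 0 (sqrt c) s
      * (\<tau>\<^sup>2 + 2 * (e1\<^sup>2 + e2\<^sup>2 + (real CARD('n) - 2) * e3\<^sup>2) + (2 * e2 * \<tau> + 4 * e2\<^sup>2) * s\<^sup>2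
        + e2\<^sup>2 * s ^ 4))
      ((e1 + (1 + c) * e2 + (real CARD('n) - 2) * e3)\<^sup>2
        + 2 * (e1\<^sup>2 + (1 + c)\<^sup>2 * e2\<^sup>2 + (real CARD('n) - 2) * e3\<^sup>2))"
    using has_bochner_integral_normal_even_poly[OF c, of "\<tau>\<^sup>2 + 2 * (e1\<^sup>2 + e2\<^sup>2 + (real CARD('n) - 2) * e3\<^sup>2)"
        "2 * e2 * \<tau> + 4 * e2\<^sup>2" "e2\<^sup>2"]
    by (rule has_bochner_integral_cong[THEN iffD1, rotated 3])
      (simp_all add: \<tau>_def power2_eq_square algebra_simps)
qed (simp_all add: v c ansatz_form_def)

section \<open>The population loss on the ansatz family\<close>

lemma integral_normal_noise_square:
  assumes "\<sigma> > 0"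
  shows "(\<integral>\<nu>. ((a + \<nu>) - b)\<^sup>2 \<partial>density lborel (normal_density 0 \<sigma>)) = (a - b)\<^sup>2 + \<sigma>\<^sup>2"
proof -
  let ?n = "normal_density 0 \<sigma>"
  have "has_bochner_integral lborel ?n 1"
    using assms by (simp add: has_bochner_integral_iff)
  moreover have "has_bochner_integral lborel (\<lambda>\<nu>. ?n \<nu> * \<nu>) 0"
    using normal_moment_odd[of \<sigma> 0 0] assms by simp
  moreover have "has_bochner_integral lborel (\<lambda>\<nu>. ?n \<nu> * \<nu>\<^sup>2) (\<sigma>\<^sup>2)"
    using normal_moment_even[of \<sigma> 0 1] assms by simp
  ultimately have "has_bochner_integral lborel
      (\<lambda>\<nu>. (a - b)\<^sup>2 * ?n \<nu> + (2 * (a - b)) * (?n \<nu> * \<nu>) + ?n \<nu> * \<nu>\<^sup>2)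
      ((a - b)\<^sup>2 * 1 + (2 * (a - b)) * 0 + \<sigma>\<^sup>2)"
    by (intro has_bochner_integral_add has_bochner_integral_mult_right)
  then have "has_bochner_integral lborel (\<lambda>\<nu>. ?n \<nu> *\<^sub>R ((a + \<nu>) - b)\<^sup>2) ((a - b)\<^sup>2 + \<sigma>\<^sup>2)"
    by (rule has_bochner_integral_cong[THEN iffD1, rotated 3])
      (simp_all add: power2_eq_square algebra_simps)
  then show ?thesis
    by (subst integral_density) (auto simp: has_bochner_integral_iff)
qed

lemma sum_matrix_vector_mult: "(\<Sum>j\<in>S. A j) *v x = (\<Sum>j\<in>S. A j *v (x :: 'a::comm_semiring_1^'n))"
  by (induction S rule: infinite_finite_induct) (simp_all add: matrix_vector_mult_add_rdistrib)

lemma quadratic_form_of_sum_outer: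
  fixes W :: "real^'n^'m" and w v :: "real^'n"
  assumes "(\<Sum>j\<in>UNIV. outer (W $ j) (W $ j))
      = \<alpha> *\<^sub>R outer w w + \<beta> *\<^sub>R outer v v + \<gamma> *\<^sub>R (mat 1 - outer w w - outer v v)"
  shows "(\<Sum>j\<in>UNIV. (W $ j \<bullet> x)\<^sup>2) = ansatz_form w v \<alpha> \<beta> \<gamma> x"
proof -
  have "(\<Sum>j\<in>UNIV. (W $ j \<bullet> x)\<^sup>2) = x \<bullet> ((\<Sum>j\<in>UNIV. outer (W $ j) (W $ j)) *v x)"
    by (simp add: sum_matrix_vector_mult outer_mult_vector inner_sum_right power2_eq_square
        inner_commute)
  also have "\<dots> = ansatz_form w v \<alpha> \<beta> \<gamma> x"
    by (simp add: assms outer_mult_vector scaleR_matrix_mult_vector ansatz_form_def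
        power2_eq_square inner_commute algebra_simps)
  finally show ?thesis .
qed

definition reduced_loss :: "real \<Rightarrow> real \<Rightarrow> real \<Rightarrow> real \<Rightarrow> real \<Rightarrow> real \<Rightarrow> real" where
  "reduced_loss lam \<sigma> d \<alpha> \<beta> \<gamma> = \<sigma>\<^sup>2 + (\<alpha> + (1 + lam) * \<beta> + (d - 2) * \<gamma> - 1)\<^sup>2
     + 2 * ((\<alpha> - 1)\<^sup>2 + (1 + lam)\<^sup>2 * \<beta>\<^sup>2 + (d - 2) * \<gamma>\<^sup>2)"

lemma pop_loss_ansatz:
  fixes ws v :: "real^'n" and W :: "real^'n^'n" and \<alpha> \<beta> \<gamma> :: real
  assumes ws: "ws \<bullet> ws = 1" and v: "v \<bullet> v = 1" and wv: "ws \<bullet> v = 0" and lam: "lam > 0"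
    and \<sigma>: "\<sigma> > 0"
    and quadratic_form: "\<And>x. (\<Sum>j\<in>UNIV. (W $ j \<bullet> x)\<^sup>2) = ansatz_form ws v \<alpha> \<beta> \<gamma> x"
  shows "pop_loss (mat 1 + lam *\<^sub>R outer v v) ws \<sigma> W = reduced_loss lam \<sigma> CARD('n) \<alpha> \<beta> \<gamma>"
proof -
  have noise: "(\<integral>\<nu>. (((x \<bullet> ws)\<^sup>2 + \<nu>) - (\<Sum>j\<in>UNIV. (W $ j \<bullet> x)\<^sup>2))\<^sup>2 \<partial>density lborel (normal_density 0 \<sigma>))
      = \<sigma>\<^sup>2 * 1 + (ansatz_form ws v (1 - \<alpha>) (- \<beta>) (- \<gamma>) x)\<^sup>2" for x
    unfolding integral_normal_noise_square[OF \<sigma>] quadratic_form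
    using ws by (simp add: ansatz_form_def algebra_simps)
  have "has_bochner_integral (density lborel (gauss_density (mat 1 + lam *\<^sub>R outer v v)))
      (\<lambda>x. \<sigma>\<^sup>2 * 1 + (ansatz_form ws v (1 - \<alpha>) (- \<beta>) (- \<gamma>) x)\<^sup>2)
      (\<sigma>\<^sup>2 * 1 + (((1 - \<alpha>) + (1 + lam) * (- \<beta>) + (real CARD('n) - 2) * (- \<gamma>))\<^sup>2
        + 2 * ((1 - \<alpha>)\<^sup>2 + (1 + lam)\<^sup>2 * (- \<beta>)\<^sup>2 + (real CARD('n) - 2) * (- \<gamma>)\<^sup>2)))"
    by (intro has_bochner_integral_add has_bochner_integral_mult_right
        has_bochner_integral_gauss_density_rank_one_const[OF v lam]
        has_bochner_integral_gauss_density_rank_one_ansatz_form_square[OF ws v wv lam])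
  then show ?thesis
    unfolding pop_loss_def noise
    by (simp add: has_bochner_integral_iff reduced_loss_def power2_eq_square algebra_simps)
qed

section \<open>Gradient flow of the ansatz coefficients\<close>

definition ansatz_map :: "'a::real_inner \<Rightarrow> 'a \<Rightarrow> real \<Rightarrow> real \<Rightarrow> real \<Rightarrow> 'a \<Rightarrow> 'a" where
  "ansatz_map w v k1 k2 k3 x
     = (k1 * (x \<bullet> w)) *\<^sub>R w + (k2 * (x \<bullet> v)) *\<^sub>R v + k3 *\<^sub>R (x - (x \<bullet> w) *\<^sub>R w - (x \<bullet> v) *\<^sub>R v)"

lemma ansatz_map_inner_commute: "ansatz_map w v k1 k2 k3 y \<bullet> x = y \<bullet> ansatz_map w v k1 k2 k3 x"
  by (simp add: ansatz_map_def inner_commute algebra_simps)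

lemma inner_ansatz_map_self: "x \<bullet> ansatz_map w v k1 k2 k3 x = ansatz_form w v k1 k2 k3 x"
  by (simp add: ansatz_map_def ansatz_form_def inner_commute power2_eq_square algebra_simps)

lemma linear_ansatz_map: "linear (ansatz_map w v k1 k2 k3)"
  by (simp add: linear_iff ansatz_map_def algebra_simps)

lemma ansatz_map_one_plus_scaleR:
  "ansatz_map w v (1 + s * k1) (1 + s * k2) (1 + s * k3) y = y + s *\<^sub>R ansatz_map w v k1 k2 k3 y"
  by (simp add: ansatz_map_def algebra_simps)

lemma ansatz_form_ansatz_map:
  assumes "w \<bullet> w = 1" "v \<bullet> v = 1" "w \<bullet> v = 0"
  shows "ansatz_form w v \<alpha> \<beta> \<gamma> (ansatz_map w v k1 k2 k3 x)
    = ansatz_form w v (k1\<^sup>2 * \<alpha>) (k2\<^sup>2 * \<beta>) (k3\<^sup>2 * \<gamma>) x"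
  using assms
  by (simp add: ansatz_form_def ansatz_map_def inner_commute power2_eq_square algebra_simps)

lemma sum_Basis_ansatz_form:
  fixes w v :: "'a::euclidean_space"
  assumes "w \<bullet> w = 1" "v \<bullet> v = 1"
  shows "(\<Sum>e\<in>Basis. ansatz_form w v \<alpha> \<beta> \<gamma> e) = \<alpha> + \<beta> + (real DIM('a) - 2) * \<gamma>"
proof -
  have "(\<Sum>e\<in>Basis. (e \<bullet> u)\<^sup>2) = u \<bullet> u" for u :: 'a
    by (simp add: euclidean_inner[of u u] power2_eq_square inner_commute)
  then show ?thesis
    using assms by (simp add: ansatz_form_def sum.distrib sum_subtractf algebra_simps
        flip: sum_distrib_left)
qed

lemma sum_ansatz_form_of_quadratic_form:
  fixes u :: "'j \<Rightarrow> 'a::euclidean_space" and w v :: 'a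
  assumes "finite J" and "w \<bullet> w = 1" "v \<bullet> v = 1" "w \<bullet> v = 0"
    and quadratic_form: "\<And>x. (\<Sum>j\<in>J. (u j \<bullet> x)\<^sup>2) = ansatz_form w v \<alpha> \<beta> \<gamma> x"
  shows "(\<Sum>j\<in>J. ansatz_form w v k1 k2 k3 (u j)) = k1 * \<alpha> + k2 * \<beta> + k3 * (real DIM('a) - 2) * \<gamma>"
proof -
  have w_part: "(\<Sum>j\<in>J. (u j \<bullet> w)\<^sup>2) = \<alpha>" and v_part: "(\<Sum>j\<in>J. (u j \<bullet> v)\<^sup>2) = \<beta>"
    using assms by (simp_all add: quadratic_form ansatz_form_def inner_commute)
  have "(\<Sum>j\<in>J. u j \<bullet> u j) = (\<Sum>e\<in>Basis. \<Sum>j\<in>J. (u j \<bullet> e)\<^sup>2)"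
    by (simp add: euclidean_inner[of "u j" "u j" for j] power2_eq_square sum.swap[of _ J])
  then have norm_part: "(\<Sum>j\<in>J. u j \<bullet> u j) = \<alpha> + \<beta> + (real DIM('a) - 2) * \<gamma>"
    using assms(2,3) by (simp add: quadratic_form sum_Basis_ansatz_form)
  have "(\<Sum>j\<in>J. ansatz_form w v k1 k2 k3 (u j)) = k1 * (\<Sum>j\<in>J. (u j \<bullet> w)\<^sup>2)
      + k2 * (\<Sum>j\<in>J. (u j \<bullet> v)\<^sup>2)
      + k3 * ((\<Sum>j\<in>J. u j \<bullet> u j) - (\<Sum>j\<in>J. (u j \<bullet> w)\<^sup>2) - (\<Sum>j\<in>J. (u j \<bullet> v)\<^sup>2))"
    by (simp add: ansatz_form_def sum.distrib sum_subtractf sum_distrib_left algebra_simps)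
  then show ?thesis
    unfolding w_part v_part norm_part by (simp add: algebra_simps)
qed

lemma has_derivative_inner_gradient_eq:
  assumes "(L has_derivative (\<lambda>H. G \<bullet> H)) (at W0)"
    and "\<And>s. L (W0 + s *\<^sub>R H) = \<psi> s" and "(\<psi> has_real_derivative D) (at 0)"
  shows "G \<bullet> H = D"
proof -
  have "((\<lambda>s::real. W0 + s *\<^sub>R H) has_derivative (\<lambda>h. h *\<^sub>R H)) (at 0)"
    by (auto intro!: derivative_eq_intros)
  moreover have "(L has_derivative (\<lambda>H. G \<bullet> H)) (at (W0 + 0 *\<^sub>R H))"
    using assms(1) by simp
  ultimately have "((\<lambda>s. L (W0 + s *\<^sub>R H)) has_derivative (\<lambda>h. G \<bullet> (h *\<^sub>R H))) (at 0)"
    by (rule has_derivative_compose)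
  moreover have "(\<lambda>h. G \<bullet> (h *\<^sub>R H)) = (*) (G \<bullet> H)"
    by auto
  ultimately have "(\<psi> has_real_derivative G \<bullet> H) (at 0)"
    by (simp add: assms(2) has_field_derivative_def)
  then show ?thesis
    using assms(3) by (rule DERIV_unique)
qed

lemma has_real_derivative_inner_self_adjoint:
  fixes f :: "real \<Rightarrow> 'a::real_inner" and R :: "'a \<Rightarrow> 'a"
  assumes R: "bounded_linear R" and self_adjoint: "\<And>x y. R x \<bullet> y = x \<bullet> R y"
    and f: "(f has_vector_derivative f') (at t within S)"
  shows "((\<lambda>t. f t \<bullet> R (f t)) has_real_derivative 2 * (R (f t) \<bullet> f')) (at t within S)"
proof -
  have "((\<lambda>t. R (f t)) has_vector_derivative R f') (at t within S)"
    using bounded_linear.has_vector_derivative[OF R f] .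
  then have "((\<lambda>t. f t \<bullet> R (f t)) has_derivative (\<lambda>h. f t \<bullet> (h *\<^sub>R R f') + (h *\<^sub>R f') \<bullet> R (f t)))
      (at t within S)"
    using f by (intro has_derivative_inner) (simp_all add: has_vector_derivative_def)
  moreover have "(\<lambda>h. f t \<bullet> (h *\<^sub>R R f') + (h *\<^sub>R f') \<bullet> R (f t)) = (*) (2 * (R (f t) \<bullet> f'))"
    by (auto simp: self_adjoint[symmetric] inner_commute)
  ultimately show ?thesis
    by (simp add: has_field_derivative_def)
qed

definition map_rows :: "('a \<Rightarrow> 'b) \<Rightarrow> 'a^'m \<Rightarrow> 'b^'m" where
  "map_rows f M = (\<chi> j. f (M $ j))"

lemma inner_map_rows_commute:
  fixes f :: "'a::real_inner \<Rightarrow> 'a"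
  assumes "\<And>x y. f x \<bullet> y = x \<bullet> f y"
  shows "map_rows f M \<bullet> N = M \<bullet> map_rows f (N :: 'a^'m)"
  unfolding inner_vec_def[of "map_rows f M" N] inner_vec_def[of M "map_rows f N"]
  by (simp add: map_rows_def assms)

lemma bounded_linear_map_rows:
  fixes f :: "'a::euclidean_space \<Rightarrow> 'a"
  assumes "linear f"
  shows "bounded_linear (map_rows f :: 'a^'m \<Rightarrow> 'a^'m)"
  unfolding linear_conv_bounded_linear[symmetric]
  using assms by (simp add: linear_iff map_rows_def vec_eq_iff)

lemma pop_loss_map_rows_ansatz_map:
  fixes ws v :: "real^'n" and W :: "real^'n^'n"
  assumes ws: "ws \<bullet> ws = 1" and v: "v \<bullet> v = 1" and wv: "ws \<bullet> v = 0" and lam: "lam > 0"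
    and \<sigma>: "\<sigma> > 0"
    and quadratic_form: "\<And>x. (\<Sum>j\<in>UNIV. (W $ j \<bullet> x)\<^sup>2) = ansatz_form ws v \<alpha> \<beta> \<gamma> x"
  shows "pop_loss (mat 1 + lam *\<^sub>R outer v v) ws \<sigma> (W + s *\<^sub>R map_rows (ansatz_map ws v k1 k2 k3) W)
    = reduced_loss lam \<sigma> CARD('n) ((1 + s * k1)\<^sup>2 * \<alpha>) ((1 + s * k2)\<^sup>2 * \<beta>) ((1 + s * k3)\<^sup>2 * \<gamma>)"
proof (rule pop_loss_ansatz[OF ws v wv lam \<sigma>])
  fix x :: "real^'n"
  have "(W + s *\<^sub>R map_rows (ansatz_map ws v k1 k2 k3) W) $ j \<bullet> x
      = W $ j \<bullet> ansatz_map ws v (1 + s * k1) (1 + s * k2) (1 + s * k3) x" for j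
    by (simp add: map_rows_def ansatz_map_one_plus_scaleR inner_add_left inner_add_right
        ansatz_map_inner_commute)
  then show "(\<Sum>j\<in>UNIV. ((W + s *\<^sub>R map_rows (ansatz_map ws v k1 k2 k3) W) $ j \<bullet> x)\<^sup>2)
      = ansatz_form ws v ((1 + s * k1)\<^sup>2 * \<alpha>) ((1 + s * k2)\<^sup>2 * \<beta>) ((1 + s * k3)\<^sup>2 * \<gamma>) x"
    by (simp add: quadratic_form ansatz_form_ansatz_map[OF ws v wv])
qed

lemma has_real_derivative_reduced_loss_rescale:
  fixes \<alpha> \<beta> \<gamma> d lam \<sigma> k1 k2 k3 :: real
  defines "r \<equiv> \<alpha> + (1 + lam) * \<beta> + (d - 2) * \<gamma>"
  shows "((\<lambda>s. reduced_loss lam \<sigma> d ((1 + s * k1)\<^sup>2 * \<alpha>) ((1 + s * k2)\<^sup>2 * \<beta>) ((1 + s * k3)\<^sup>2 * \<gamma>))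
    has_real_derivative 2 * k1 * \<alpha> * (2 * (r - 1) + 4 * (\<alpha> - 1))
      + 2 * k2 * \<beta> * (1 + lam) * (2 * (r - 1) + 4 * (1 + lam) * \<beta>)
      + 2 * k3 * \<gamma> * (d - 2) * (2 * (r - 1) + 4 * \<gamma>)) (at 0)"
  unfolding reduced_loss_def r_def
  by (auto intro!: derivative_eq_intros simp: power2_eq_square algebra_simps)

lemma gradient_flow_ansatz_combination:
  fixes ws v :: "real^'n" and W G :: "real \<Rightarrow> real^'n^'n" and a b c :: "real \<Rightarrow> real"
    and k1 k2 k3 lam \<sigma> t :: real
  assumes ws: "ws \<bullet> ws = 1" and v: "v \<bullet> v = 1" and wv: "ws \<bullet> v = 0" and lam: "lam > 0"
    and \<sigma>: "\<sigma> > 0"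
    and grad: "(pop_loss (mat 1 + lam *\<^sub>R outer v v) ws \<sigma> has_derivative (\<lambda>H. G t \<bullet> H)) (at (W t))"
    and flow: "(W has_vector_derivative (- G t)) (at t within {0..})"
    and quadratic_form: "\<And>t x. t \<ge> 0 \<Longrightarrow>
      (\<Sum>j\<in>UNIV. (W t $ j \<bullet> x)\<^sup>2) = ansatz_form ws v (a t) (b t) (c t) x"
    and t: "t \<ge> 0"
  defines "d \<equiv> real CARD('n)"
  defines "r \<equiv> a t + (1 + lam) * b t + (d - 2) * c t"
  shows "((\<lambda>t. k1 * a t + k2 * b t + k3 * (d - 2) * c t) has_real_derivative
      - 4 * (k1 * a t * (2 * (r - 1) + 4 * (a t - 1))
        + k2 * b t * (1 + lam) * (2 * (r - 1) + 4 * (1 + lam) * b t)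
        + k3 * c t * (d - 2) * (2 * (r - 1) + 4 * c t))) (at t within {0..})"
proof -
  let ?R = "map_rows (ansatz_map ws v k1 k2 k3) :: real^'n^'n \<Rightarrow> real^'n^'n"
  have R_self_adjoint: "?R M \<bullet> N = M \<bullet> ?R N" for M N
    by (rule inner_map_rows_commute) (rule ansatz_map_inner_commute)
  have invariant: "W t' \<bullet> ?R (W t') = k1 * a t' + k2 * b t' + k3 * (d - 2) * c t'" if "t' \<ge> 0" for t'
    using sum_ansatz_form_of_quadratic_form[OF _ ws v wv quadratic_form[OF that]]
    unfolding inner_vec_def[of "W t'" "?R (W t')"]
    by (simp add: map_rows_def inner_ansatz_map_self d_def)
  have "G t \<bullet> ?R (W t) = 2 * k1 * a t * (2 * (r - 1) + 4 * (a t - 1))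
      + 2 * k2 * b t * (1 + lam) * (2 * (r - 1) + 4 * (1 + lam) * b t)
      + 2 * k3 * c t * (d - 2) * (2 * (r - 1) + 4 * c t)"
    unfolding d_def r_def
    by (rule has_derivative_inner_gradient_eq[OF grad
          pop_loss_map_rows_ansatz_map[OF ws v wv lam \<sigma> quadratic_form[OF t]]
          has_real_derivative_reduced_loss_rescale])
  moreover have "((\<lambda>t. W t \<bullet> ?R (W t)) has_real_derivative 2 * (?R (W t) \<bullet> - G t)) (at t within {0..})"
    using bounded_linear_map_rows[OF linear_ansatz_map] R_self_adjoint flow
    by (rule has_real_derivative_inner_self_adjoint)
  ultimately have "((\<lambda>t. W t \<bullet> ?R (W t)) has_real_derivative
      - 4 * (k1 * a t * (2 * (r - 1) + 4 * (a t - 1))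
        + k2 * b t * (1 + lam) * (2 * (r - 1) + 4 * (1 + lam) * b t)
        + k3 * c t * (d - 2) * (2 * (r - 1) + 4 * c t))) (at t within {0..})"
    by (auto elim!: DERIV_cong simp: inner_commute algebra_simps)
  then show ?thesis
    by (rule has_field_derivative_transform_within[OF _ zero_less_one]) (use t invariant in auto)
qed

lemma gradient_flow_ansatz_odes:
  fixes ws v :: "real^'n" and W G :: "real \<Rightarrow> real^'n^'n" and a b c :: "real \<Rightarrow> real"
    and lam \<sigma> t :: real
  assumes d3: "CARD('n) \<ge> 3"
    and ws: "ws \<bullet> ws = 1" and v: "v \<bullet> v = 1" and wv: "ws \<bullet> v = 0" and lam: "lam > 0"
    and \<sigma>: "\<sigma> > 0"
    and grad: "\<And>t. t \<ge> 0 \<Longrightarrow>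
      (pop_loss (mat 1 + lam *\<^sub>R outer v v) ws \<sigma> has_derivative (\<lambda>H. G t \<bullet> H)) (at (W t))"
    and flow: "\<And>t. t \<ge> 0 \<Longrightarrow> (W has_vector_derivative (- G t)) (at t within {0..})"
    and quadratic_form: "\<And>t x. t \<ge> 0 \<Longrightarrow>
      (\<Sum>j\<in>UNIV. (W t $ j \<bullet> x)\<^sup>2) = ansatz_form ws v (a t) (b t) (c t) x"
    and t: "t \<ge> 0"
  defines "r \<equiv> a t + (1 + lam) * b t + (real CARD('n) - 2) * c t"
  shows "(a has_real_derivative - 2 * (8 * (a t - 1) + 4 * (r - 1)) * a t) (at t within {0..})"
    and "(b has_real_derivative - 2 * (8 * (1 + lam)\<^sup>2 * b t + 4 * (1 + lam) * (r - 1)) * b t)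
      (at t within {0..})"
    and "(c has_real_derivative - 2 * (8 * c t + 4 * (r - 1)) * c t) (at t within {0..})"
proof -
  note combination = gradient_flow_ansatz_combination[where W = W and G = G and t = t,
      OF ws v wv lam \<sigma> grad[OF t] flow[OF t] quadratic_form t]
  show "(a has_real_derivative - 2 * (8 * (a t - 1) + 4 * (r - 1)) * a t) (at t within {0..})"
    using combination[of 1 0 0] by (auto elim!: DERIV_cong simp: r_def algebra_simps)
  show "(b has_real_derivative - 2 * (8 * (1 + lam)\<^sup>2 * b t + 4 * (1 + lam) * (r - 1)) * b t)
      (at t within {0..})"
    using combination[of 0 1 0] by (auto elim!: DERIV_cong simp: r_def power2_eq_square algebra_simps)
  have "((\<lambda>t. (real CARD('n) - 2) * c t) has_real_derivative
      - 4 * (c t * (real CARD('n) - 2) * (2 * (r - 1) + 4 * c t))) (at t within {0..})"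
    using combination[of 0 0 1] by (simp add: r_def)
  from DERIV_cdivide[OF this, of "real CARD('n) - 2"]
  have "(c has_real_derivative - 4 * (c t * (2 * (r - 1) + 4 * c t))) (at t within {0..})"
    using d3 by simp
  then show "(c has_real_derivative - 2 * (8 * c t + 4 * (r - 1)) * c t) (at t within {0..})"
    by (rule DERIV_cong) (simp add: algebra_simps)
qed

theorem proposition5p1:
  fixes ws v :: "real^'d"
    and lam \<sigma> :: real
    and W G :: "real \<Rightarrow> real^'d^'d"
    and a b c :: "real \<Rightarrow> real"
  assumes d3: "CARD('d) \<ge> 3"
    and lam: "lam > 0"
    and sig: "\<sigma> > 0"
    and ws_unit: "norm ws = 1"
    and v_unit: "norm v = 1"
    and orth: "v \<bullet> ws = 0"
    and grad: "\<And>t. t \<ge> 0 \<Longrightarrow>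
       (pop_loss (mat 1 + lam *\<^sub>R outer v v) ws \<sigma> has_derivative (\<lambda>H. G t \<bullet> H)) (at (W t))"
    and flow: "\<And>t. t \<ge> 0 \<Longrightarrow> (W has_vector_derivative (- G t)) (at t within {0..})"
    and ansatz: "\<And>t. t \<ge> 0 \<Longrightarrow>
       (\<Sum>j\<in>UNIV. outer (W t $ j) (W t $ j)) =
         a t *\<^sub>R outer ws ws + b t *\<^sub>R outer v v
         + c t *\<^sub>R (mat 1 - outer ws ws - outer v v)"
  shows "\<forall>t\<ge>0.
     (let r = a t + (1 + lam) * b t + (real CARD('d) - 2) * c t;
          g_w = 8 * (a t - 1) + 4 * (r - 1);
          g_v = 8 * (1 + lam)\<^sup>2 * b t + 4 * (1 + lam) * (r - 1);
          g_p = 8 * c t + 4 * (r - 1)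
      in (a has_real_derivative (- 2 * g_w * a t)) (at t within {0..})
       \<and> (b has_real_derivative (- 2 * g_v * b t)) (at t within {0..})
       \<and> (c has_real_derivative (- 2 * g_p * c t)) (at t within {0..}))"
proof -
  have ws: "ws \<bullet> ws = 1" and v: "v \<bullet> v = 1" and wv: "ws \<bullet> v = 0"
    using ws_unit v_unit orth by (simp_all add: norm_eq_1 inner_commute)
  have quadratic_form: "\<And>t x. t \<ge> 0 \<Longrightarrow>
      (\<Sum>j\<in>UNIV. (W t $ j \<bullet> x)\<^sup>2) = ansatz_form ws v (a t) (b t) (c t) x"
    using quadratic_form_of_sum_outer[OF ansatz] by blast
  show ?thesis
    unfolding Let_def using gradient_flow_ansatz_odes[OF d3 ws v wv lam sig grad flow quadratic_form]
    by blast
qed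

end
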